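(* Assume the standing hypotheses (H). For $(t,\mathbf x)\in\mathbf D$ and $\psi>0$ consider the problem of minimising $H^\psi_1(t,\mathbf x;\boldsymbol\zeta)$ subject to $\boldsymbol\zeta\in\mathbf Z^0_{\mathrm{lin}}(t,\mathbf x)$. (a) For each $(t,\mathbf x)\in\mathbf D$ and $\psi>0$, $\min_{\boldsymbol\zeta\in\mathbf Z^0_{\mathrm{lin}}(t,\mathbf x)}H^\psi_1(t,\mathbf x;\boldsymbol\zeta)=-\frac12\widetilde g(t,\mathbf x)\psi$, and the minimum is attained at $\boldsymbol\zeta^{\psi*}(t,\mathbf x)=\boldsymbol\zeta^0(\Sigma)+\psi\widetilde{\boldsymbol\zeta}(t,\mathbf x)$. In particular $\mathbf c(t,\mathbf x)^\top\widetilde{\boldsymbol\zeta}(t,\mathbf x)=0$ and $\mathbf e_4^\top\widetilde{\boldsymbol\zeta}(t,\mathbf x)\ge0$. (b) For each $(t,\mathbf x)\in\mathbf D$ and $\psi>0$, $(\lambda(t,\mathbf x),\mu(t,\mathbf x))$ is a Lagrange multiplier for this problem (independent of $\psi$), i.e. $-\frac12\widetilde g(t,\mathbf x)\psi=\inf_{\boldsymbol\zeta\in\mathbb R^4}L^\psi_1(t,\mathbf x;\boldsymbol\zeta,\lambda(t,\mathbf x),\mu(t,\mathbf x))$, where $L^\psi_1(t,\mathbf x;\boldsymbol\zeta,\lambda',\mu')=H^\psi_1(t,\mathbf x;\boldsymbol\zeta)+\lambda'\mathbf c(t,\mathbf x)^\top(\boldsymbol\zeta-\boldsymbol\zeta^0(\Sigma))-\mu'\mathbf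 e_4^\top(\boldsymbol\zeta-\boldsymbol\zeta^0(\Sigma))$. (c) There is $K_{\widetilde g}>0$ with $0\le\widetilde g\le K_{\widetilde g}$ on $\mathbf D$. (d) There is $K_{\boldsymbol\zeta}\ge1$ such that $\|\boldsymbol\zeta^\psi(t,\mathbf x)-\boldsymbol\zeta^0(\Sigma)\|\le K_{\boldsymbol\zeta}\psi$ for all $(t,\mathbf x)\in\mathbf D$ and $\psi>0$. (e) For every $(t,\mathbf x)\in\mathbf D$ and $\psi>0$, $H^\psi_1(t,\mathbf x;\boldsymbol\zeta^\psi(t,\mathbf x))=-\frac12\widetilde g(t,\mathbf x)\mathbf 1_{\{\Sigma\in(\underline\Sigma,\overline\Sigma)\}}\psi$. (f) There is $K_\lambda\in L^2_{\mathfrak P}$ such that for every $(t,\mathbf x)\in\mathbf D$, $|\lambda(t,\mathbf x)|\,\Big\|\begin{pmatrix}S^2\mathcal C_{SS}&S\mathcal C_{S\Sigma}\\S\mathcal C_{S\Sigma}&\mathcal C_{\Sigma\Sigma}\end{pmatrix}\Big\|_F\le K_\lambda(t,\mathbf x)$.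
   Context: Setting. Fix $T>0$, $S_0>0$, $\Sigma_0>0$, $A_0\in\mathbb R$. $\Omega$: continuous paths $\omega=(\omega^S,\omega^\Sigma,\omega^A):[0,T]\to\mathbb R^3$ with $\omega_0=(S_0,\Sigma_0,A_0)$ (uniform topology, Borel $\sigma$-algebra $\mathcal F$); $S,\Sigma,A$ coordinate processes, $\mathbb F$ their raw filtration, $M_t=\sup_{u\le t}S_u$, $\mathbf X_t=(S_t,A_t,M_t,\Sigma_t)$. $\mathbf G=\mathbb R_+\times\mathbb R\times\mathbb R_+$, $\mathbf D^0=(0,T)\times\mathbf G\times\mathbb R_+$ (points $(t,\mathbf x)$, $\mathbf x=(S,A,M,\Sigma)$); $0<\underline\Sigma<\Sigma_0<\overline\Sigma$, $\mathbf D=(0,T)\times\mathbf G\times[\underline\Sigma,\overline\Sigma]$. $\|\cdot\|$ Euclidean norm, $\|\cdot\|_F$ Frobenius norm, $\mathbf e_4$ fourth unit vector, $x^-=\max(-x,0)$. Call: $\mathcal C(t,S,\Sigma)$ with $\mathcal C_t+\frac12\Sigma^2S^2\mathcal C_{SS}=0$, $\mathcal C(T_{\mathsf C},S,\Sigma)=\mathsf C(S)$. $b^{\mathcal C}(t,\mathbf x;\boldsymbol\zeta)=\nu\mathcal C_\Sigma+\frac12S^2\mathcal C_{SS}(\sigma^2-\Sigma^2)+\sigma\eta S\mathcal C_{S\Sigma}+\frac12(\eta^2+\xi)\mathcal C_{\Sigma\Sigma}$ for $\boldsymbol\zeta=(\nu,\sigma,\eta,\xi)$. Models: $\mathfrak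 P^{00}$ = probability measures $P$ on $(\Omega,\mathcal F)$ with progressively measurable $\boldsymbol\zeta^P=(\nu^P,\sigma^P,\eta^P,\xi^P)$ such that $S$, $\Sigma-\int_0^\cdot\nu^P_tdt$ are continuous local $P$-martingales with $d\langle S\rangle_t=S_t^2(\sigma^P_t)^2dt$, $d\langle\Sigma\rangle_t=((\eta^P_t)^2+\xi^P_t)dt$, $d\langle S,\Sigma\rangle_t=S_t\sigma^P_t\eta^P_tdt$, $S,\Sigma>0$, $\xi^P\ge0$, $b^{\mathcal C}(t,\mathbf X_t;\boldsymbol\zeta^P_t)=0$ $dt\times P$-a.e.; for Borel $\alpha,\beta,\gamma,\delta:[0,T]\times\mathbb R^3\to\mathbb R$, $\mathfrak P^0$ = those $P$ with $dA_t=(\alpha+\frac12(\sigma^P_t)^2\beta)dt+\gamma dS_t+\delta dM_t$. $\boldsymbol\zeta^0(\Sigma)=(0,\Sigma,0,0)^\top$; reference model: $\boldsymbol\zeta^P_t=\boldsymbol\zeta^0(\Sigma_t)$ a.e. Non-traded option: $\mathcal V(\cdot,\Sigma)$ solves $\mathcal V_t+(\alpha+\frac12\beta\Sigma^2)\mathcal V_A+\frac12\Sigma^2S^2(\mathcal V_{SS}+2\gamma\mathcal V_{SA}+\gamma^2\mathcal V_{AA})=0$ on $(0,T)\times\mathbf G$, $\delta\mathcal V_A+\mathcal V_M=0$ on $\{S\ge M\}$, $\mathcal V(T,\cdot,\Sigma)=\mathsf V$. $\Delta=\mathcal V_S+\gamma\mathcal V_A$, $\Gamma=\mathcal V_{SS}+2\gamma\mathcal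 V_{SA}+\gamma^2\mathcal V_{AA}$, $\frac{\partial\Delta}{\partial\Sigma}:=\mathcal V_{S\Sigma}+\gamma\mathcal V_{A\Sigma}$. P&L: $V_t=\mathcal V(t,\mathbf X_t)$, $C_t=\mathcal C(t,S_t,\Sigma_t)$; strategies $\boldsymbol\upsilon=(\theta,\phi)$ real locally bounded progressive; $Y^{\boldsymbol\upsilon,P}_t=Y_0+V_0+\int_0^t\theta dS+\int_0^t\phi dC-V_t$. Preferences: $\Psi=\mathrm{diag}(\psi_\nu,\psi_\sigma,\psi_\eta,\psi_\xi)$, positive; a utility $U$, strategy set $\mathfrak Y$, model set $\mathfrak P\subset\mathfrak P^0$. Candidate control: $\mathbf c=(\mathcal C_\Sigma,\Sigma S^2\mathcal C_{SS},\Sigma S\mathcal C_{S\Sigma},\frac12\mathcal C_{\Sigma\Sigma})^\top$, $\mathbf v=(\mathcal V_\Sigma,\Sigma(\beta\mathcal V_A+S^2\Gamma),\Sigma S\frac{\partial\Delta}{\partial\Sigma},\frac12\mathcal V_{\Sigma\Sigma})^\top$; $\lambda=\frac{\mathbf c^\top\Psi\mathbf v}{\mathbf c^\top\Psi\mathbf c}$ if $\mathcal V_{\Sigma\Sigma}-\frac{\mathbf c^\top\Psi\mathbf v}{\mathbf c^\top\Psi\mathbf c}\mathcal C_{\Sigma\Sigma}\ge0$, else $\lambda=\frac{\mathbf c^\top\Psi\mathbf v-\frac14\mathcal C_{\Sigma\Sigma}\mathcal V_{\Sigma\Sigma}\psi_\xi}{\mathbf c^\top\Psi\mathbf c-\frac14\mathcal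 C_{\Sigma\Sigma}^2\psi_\xi}$; $\mu=\frac12(\mathcal V_{\Sigma\Sigma}-\lambda\mathcal C_{\Sigma\Sigma})^-$; $\widetilde{\boldsymbol\zeta}=\Psi(\mathbf v-\lambda\mathbf c+\mu\mathbf e_4)$; $\boldsymbol\zeta^\psi=\boldsymbol\zeta^0(\Sigma)+\widetilde{\boldsymbol\zeta}\mathbf 1_{\{\underline\Sigma<\Sigma<\overline\Sigma\}}\psi$; $\widetilde g=\mathbf v^\top\widetilde{\boldsymbol\zeta}$. Cash-equivalent PDE: for $\Sigma\in[\underline\Sigma,\overline\Sigma]$, $\widetilde w_t+(\alpha+\frac12\beta\Sigma^2)\widetilde w_A+\frac12\Sigma^2S^2(\widetilde w_{SS}+2\gamma\widetilde w_{SA}+\gamma^2\widetilde w_{AA})+\frac12\widetilde g(\cdot,\Sigma)=0$ on $(0,T)\times\mathbf G$, $\delta\widetilde w_A+\widetilde w_M=0$ on $\{S\ge M\}$, $\widetilde w(T,\cdot,\Sigma)=0$. $L^p_{\mathfrak P}$: Borel $K$ on $\mathbf D^0$ with $\sup_{P\in\mathfrak P}E^P[\int_0^T|K(t,\mathbf X_t)|^pdt]^{1/p}<\infty$. Candidate asymptotic model family: $(P^\psi)_{\psi\in(0,\psi_0)}\subset\mathfrak P$, $\psi_0\in(0,1)$, with $K_0\in L^4_{\mathfrak P}$ and $\|\boldsymbol\zeta^{P^\psi}_t-\boldsymbol\zeta^\psi(t,\mathbf X_t)\|\le K_0(t,\mathbf X_t)\psi^2$ $dt\times P^\psi$-a.e.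 Assumption (A): (a) $\exists K_{\mathfrak Y}$: $Y^{\boldsymbol\upsilon,P}>-K_{\mathfrak Y}$ $dt\times P$-a.e. for all $\boldsymbol\upsilon\in\mathfrak Y$, $P\in\mathfrak P$; (b) $\mathfrak P$ contains a candidate asymptotic model family and a reference model, and constants $\underline\nu<0<\overline\nu$, $0<\underline\sigma<\underline\Sigma$, $\overline\Sigma<\overline\sigma$, $\underline\eta<0<\overline\eta$, $\overline\xi>0$ bound $\nu^P,\sigma^P,\eta^P,\xi^P,\Sigma$ in $[\underline\nu,\overline\nu],[\underline\sigma,\overline\sigma],[\underline\eta,\overline\eta],[0,\overline\xi],[\underline\Sigma,\overline\Sigma]$ $dt\times P$-a.e. for all $P\in\mathfrak P$; (c) $T_{\mathsf C}\ge T$, $\mathcal C\in C^{1,2,2}((0,T_{\mathsf C})\times\mathbb R_+^2)\cap C([0,T_{\mathsf C}]\times\overline{\mathbb R}_+^2)$ solves the call PDE classically for $\Sigma\in[\underline\Sigma,\overline\Sigma]$, $\mathcal C_\Sigma\ne0$ and $|\mathcal C_{\Sigma\Sigma}|\le K_{\mathcal C}(|\mathcal C_\Sigma|+|S^2\mathcal C_{SS}|+|S\mathcal C_{S\Sigma}|)$ on $(0,T)\times\mathbb R_+\times[\underline\Sigma,\overline\Sigma]$ with $K_{\mathcal C}\in L^2_{\mathfrak P}$; (d) $\mathcal V\in C^{1,2,2,1,2}(\mathbf D^0)\cap C(\overline{\mathbf D^0})$ solves the $\mathcal V$-PDE classically for $\Sigma\in[\underline\Sigma,\overline\Sigma]$,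 $|\mathcal V_\Sigma|,|\beta\mathcal V_A+S^2\Gamma|,|S\frac{\partial\Delta}{\partial\Sigma}|,|\mathcal V_{\Sigma\Sigma}|\le K_{\mathcal V}$ on $\mathbf D$; (e) $\widetilde w\in C^{1,2,2,1,2}(\mathbf D^0)\cap C(\overline{\mathbf D^0})$ solves the cash-equivalent PDE classically for $\Sigma\in[\underline\Sigma,\overline\Sigma]$, $0\le\widetilde w\le K_{\widetilde w}$ on $\mathbf D$, and $\widetilde w_\Sigma,S(\widetilde w_S+\gamma\widetilde w_A),\beta\widetilde w_A+S^2(\widetilde w_{SS}+2\gamma\widetilde w_{SA}+\gamma^2\widetilde w_{AA}),S(\widetilde w_{S\Sigma}+\gamma\widetilde w_{A\Sigma}),\widetilde w_{\Sigma\Sigma}\in L^4_{\mathfrak P}$; (f) $U\in C^3(\mathbb R)$, $U'>0$, $U''<0$, $-U''/U'$ nonincreasing. Additional notation. $\mathbf Z^0=\mathbb R^3\times[0,\infty)$; for $(t,\mathbf x)\in\mathbf D$, $\mathbf Z^0_{\mathrm{lin}}(t,\mathbf x)=\{\boldsymbol\zeta\in\mathbf Z^0:\mathbf c(t,\mathbf x)^\top(\boldsymbol\zeta-\boldsymbol\zeta^0(\Sigma))=0\}$. $H^\psi_1(t,\mathbf x;\boldsymbol\zeta)=\frac1{2\psi}(\boldsymbol\zeta-\boldsymbol\zeta^0(\Sigma))^\top\Psi^{-1}(\boldsymbol\zeta-\boldsymbol\zeta^0(\Sigma))-\mathbf v(t,\mathbf x)^\top(\boldsymbol\zeta-\boldsymbol\zeta^0(\Sigma))$.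 Delta-vega hedge $\boldsymbol\upsilon^\star_t=(\Delta-\frac{\mathcal V_\Sigma}{\mathcal C_\Sigma}\mathcal C_S,\frac{\mathcal V_\Sigma}{\mathcal C_\Sigma})(t,\mathbf X_t)$. Standing hypotheses (H): Assumption (A) holds, $\boldsymbol\upsilon^\star\in\mathfrak Y$, and $(P^\psi)_{\psi\in(0,\psi_0)}\subset\mathfrak P$ is a candidate asymptotic model family. *)

theory Defs
  imports "HOL-Probability.Probability"
begin

text \<open>Continuous paths on [0,T] are represented as bounded continuous functions on the
  real line that are constant outside [0,T] (clamping); the sup-metric of the type
  \<open>real \<Rightarrow>\<^sub>C _\<close> restricted to this set is exactly the uniform metric on [0,T].\<close>

type_synonym path = "real \<Rightarrow>\<^sub>C (real \<times> real \<times> real)"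

definition Omega :: "real \<Rightarrow> real \<Rightarrow> real \<Rightarrow> real \<Rightarrow> path set" where
  "Omega T S0 Sig0 A0 =
     {\<omega>. apply_bcontfun \<omega> 0 = (S0, Sig0, A0) \<and>
          (\<forall>t. apply_bcontfun \<omega> t = apply_bcontfun \<omega> (min T (max 0 t)))}"

definition path_space :: "real \<Rightarrow> real \<Rightarrow> real \<Rightarrow> real \<Rightarrow> path measure" where
  "path_space T S0 Sig0 A0 = restrict_space borel (Omega T S0 Sig0 A0)"

definition S_proc :: "path \<Rightarrow> real \<Rightarrow> real" where
  "S_proc \<omega> t = fst (apply_bcontfun \<omega> t)"

definition Sig_proc :: "path \<Rightarrow> real \<Rightarrow> real" where
  "Sig_proc \<omega> t = fst (snd (apply_bcontfun \<omega> t))"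

definition A_proc :: "path \<Rightarrow> real \<Rightarrow> real" where
  "A_proc \<omega> t = snd (snd (apply_bcontfun \<omega> t))"

definition M_proc :: "path \<Rightarrow> real \<Rightarrow> real" where
  "M_proc \<omega> t = Sup (S_proc \<omega> ` {0..t})"

definition X_proc :: "path \<Rightarrow> real \<Rightarrow> real \<times> real \<times> real \<times> real" where
  "X_proc \<omega> t = (S_proc \<omega> t, A_proc \<omega> t, M_proc \<omega> t, Sig_proc \<omega> t)"

definition Lp_P :: "real \<Rightarrow> path measure set \<Rightarrow> real
                     \<Rightarrow> (real \<Rightarrow> real \<times> real \<times> real \<times> real \<Rightarrow> real) \<Rightarrow> bool" where
  "Lp_P T Pf p K \<longleftrightarrow>
     (\<lambda>(t, x). K t x) \<in> borel_measurable borel \<and>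
     (\<exists>B::real. \<forall>P\<in>Pf.
        (\<integral>\<^sup>+ \<omega>. (\<integral>\<^sup>+ t\<in>{0..T}. ennreal (\<bar>K t (X_proc \<omega> t)\<bar> powr p) \<partial>lborel) \<partial>P)
          \<le> ennreal B)"

definition in_D :: "real \<Rightarrow> real \<Rightarrow> real \<Rightarrow> real \<Rightarrow> real \<times> real \<times> real \<times> real \<Rightarrow> bool" where
  "in_D T Sig_lo Sig_hi t x \<longleftrightarrow>
     (case x of (S, A, M, Sig) \<Rightarrow>
        0 < t \<and> t < T \<and> 0 < S \<and> 0 < M \<and> Sig_lo \<le> Sig \<and> Sig \<le> Sig_hi)"

text \<open>Call price C(t,S,Sigma).\<close>
definition C_S where "C_S (C :: real \<Rightarrow> real \<Rightarrow> real \<Rightarrow> real) t S Sig = deriv (\<lambda>s. C t s Sig) S"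
definition C_SS where "C_SS C t S Sig = deriv (\<lambda>s. C_S C t s Sig) S"
definition C_Sig where "C_Sig (C :: real \<Rightarrow> real \<Rightarrow> real \<Rightarrow> real) t S Sig = deriv (\<lambda>y. C t S y) Sig"
definition C_SSig where "C_SSig C t S Sig = deriv (\<lambda>y. C_S C t S y) Sig"
definition C_SigSig where "C_SigSig C t S Sig = deriv (\<lambda>y. C_Sig C t S y) Sig"

text \<open>Non-traded option value V(t,S,A,M,Sigma).\<close>
type_synonym vfun = "real \<Rightarrow> real \<Rightarrow> real \<Rightarrow> real \<Rightarrow> real \<Rightarrow> real"

definition V_S :: "vfun \<Rightarrow> vfun" where "V_S V t S A M Sig = deriv (\<lambda>s. V t s A M Sig) S"
definition V_A :: "vfun \<Rightarrow> vfun" where "V_A V t S A M Sig = deriv (\<lambda>a. V t S a M Sig) A"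
definition V_Sig :: "vfun \<Rightarrow> vfun" where "V_Sig V t S A M Sig = deriv (\<lambda>y. V t S A M y) Sig"
definition V_SS :: "vfun \<Rightarrow> vfun" where "V_SS V t S A M Sig = deriv (\<lambda>s. V_S V t s A M Sig) S"
definition V_SA :: "vfun \<Rightarrow> vfun" where "V_SA V t S A M Sig = deriv (\<lambda>a. V_S V t S a M Sig) A"
definition V_AA :: "vfun \<Rightarrow> vfun" where "V_AA V t S A M Sig = deriv (\<lambda>a. V_A V t S a M Sig) A"
definition V_SSig :: "vfun \<Rightarrow> vfun" where "V_SSig V t S A M Sig = deriv (\<lambda>y. V_S V t S A M y) Sig"
definition V_ASig :: "vfun \<Rightarrow> vfun" where "V_ASig V t S A M Sig = deriv (\<lambda>y. V_A V t S A M y) Sig"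
definition V_SigSig :: "vfun \<Rightarrow> vfun" where "V_SigSig V t S A M Sig = deriv (\<lambda>y. V_Sig V t S A M y) Sig"

text \<open>Coefficient functions alpha, beta, gamma, delta : [0,T] \<times> R^3 \<rightarrow> R, arguments (t,S,A,M).\<close>
type_synonym cfun = "real \<Rightarrow> real \<Rightarrow> real \<Rightarrow> real \<Rightarrow> real"

definition Gamma_V :: "vfun \<Rightarrow> cfun \<Rightarrow> vfun" where
  "Gamma_V V gam t S A M Sig =
     V_SS V t S A M Sig + 2 * gam t S A M * V_SA V t S A M Sig
     + (gam t S A M)\<^sup>2 * V_AA V t S A M Sig"

definition dDelta_dSig :: "vfun \<Rightarrow> cfun \<Rightarrow> vfun" where
  "dDelta_dSig V gam t S A M Sig = V_SSig V t S A M Sig + gam t S A M * V_ASig V t S A M Sig"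

type_synonym vec4 = "real ^ 4"

definition vec4 :: "real \<Rightarrow> real \<Rightarrow> real \<Rightarrow> real \<Rightarrow> vec4" where
  "vec4 a b c d = vector [a, b, c, d]"

text \<open>Multiplication by Psi = diag(psi_nu, psi_sigma, psi_eta, psi_xi) and by its inverse.\<close>
definition Psi_mul :: "vec4 \<Rightarrow> vec4 \<Rightarrow> vec4" where
  "Psi_mul psi z = (\<chi> i. psi $ i * z $ i)"
definition Psi_inv_mul :: "vec4 \<Rightarrow> vec4 \<Rightarrow> vec4" where
  "Psi_inv_mul psi z = (\<chi> i. z $ i / psi $ i)"

definition e4 :: vec4 where "e4 = axis 4 1"

definition zeta0 :: "real \<Rightarrow> vec4" where "zeta0 Sig = vec4 0 Sig 0 0"

definition cvec :: "(real \<Rightarrow> real \<Rightarrow> real \<Rightarrow> real) \<Rightarrow> real \<Rightarrow> real \<times> real \<times> real \<times> real \<Rightarrow> vec4" where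
  "cvec C t x = (case x of (S, A, M, Sig) \<Rightarrow>
     vec4 (C_Sig C t S Sig) (Sig * S\<^sup>2 * C_SS C t S Sig) (Sig * S * C_SSig C t S Sig)
          (C_SigSig C t S Sig / 2))"

definition vvec :: "vfun \<Rightarrow> cfun \<Rightarrow> cfun \<Rightarrow> real \<Rightarrow> real \<times> real \<times> real \<times> real \<Rightarrow> vec4" where
  "vvec V bet gam t x = (case x of (S, A, M, Sig) \<Rightarrow>
     vec4 (V_Sig V t S A M Sig)
          (Sig * (bet t S A M * V_A V t S A M Sig + S\<^sup>2 * Gamma_V V gam t S A M Sig))
          (Sig * S * dDelta_dSig V gam t S A M Sig)
          (V_SigSig V t S A M Sig / 2))"

definition lam :: "vec4 \<Rightarrow> (real \<Rightarrow> real \<Rightarrow> real \<Rightarrow> real) \<Rightarrow> vfun \<Rightarrow> cfun \<Rightarrow> cfun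
                   \<Rightarrow> real \<Rightarrow> real \<times> real \<times> real \<times> real \<Rightarrow> real" where
  "lam psi C V bet gam t x =
     (let c = cvec C t x; v = vvec V bet gam t x;
          CSS = 2 * c $ 4; VSS = 2 * v $ 4;
          l1 = (c \<bullet> Psi_mul psi v) / (c \<bullet> Psi_mul psi c)
      in if VSS - l1 * CSS \<ge> 0 then l1
         else (c \<bullet> Psi_mul psi v - CSS * VSS * psi $ 4 / 4)
              / (c \<bullet> Psi_mul psi c - CSS\<^sup>2 * psi $ 4 / 4))"

definition mu :: "vec4 \<Rightarrow> (real \<Rightarrow> real \<Rightarrow> real \<Rightarrow> real) \<Rightarrow> vfun \<Rightarrow> cfun \<Rightarrow> cfun
                   \<Rightarrow> real \<Rightarrow> real \<times> real \<times> real \<times> real \<Rightarrow> real" where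
  "mu psi C V bet gam t x =
     (let c = cvec C t x; v = vvec V bet gam t x
      in max (- (2 * v $ 4 - lam psi C V bet gam t x * (2 * c $ 4))) 0 / 2)"

definition zeta_tilde :: "vec4 \<Rightarrow> (real \<Rightarrow> real \<Rightarrow> real \<Rightarrow> real) \<Rightarrow> vfun \<Rightarrow> cfun \<Rightarrow> cfun
                   \<Rightarrow> real \<Rightarrow> real \<times> real \<times> real \<times> real \<Rightarrow> vec4" where
  "zeta_tilde psi C V bet gam t x =
     Psi_mul psi (vvec V bet gam t x - lam psi C V bet gam t x *\<^sub>R cvec C t x
                  + mu psi C V bet gam t x *\<^sub>R e4)"

definition g_tilde :: "vec4 \<Rightarrow> (real \<Rightarrow> real \<Rightarrow> real \<Rightarrow> real) \<Rightarrow> vfun \<Rightarrow> cfun \<Rightarrow> cfun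
                   \<Rightarrow> real \<Rightarrow> real \<times> real \<times> real \<times> real \<Rightarrow> real" where
  "g_tilde psi C V bet gam t x = vvec V bet gam t x \<bullet> zeta_tilde psi C V bet gam t x"

definition zeta_psi :: "real \<Rightarrow> real \<Rightarrow> vec4 \<Rightarrow> (real \<Rightarrow> real \<Rightarrow> real \<Rightarrow> real) \<Rightarrow> vfun \<Rightarrow> cfun \<Rightarrow> cfun
                   \<Rightarrow> real \<Rightarrow> real \<Rightarrow> real \<times> real \<times> real \<times> real \<Rightarrow> vec4" where
  "zeta_psi Sig_lo Sig_hi psi C V bet gam \<psi> t x = (case x of (S, A, M, Sig) \<Rightarrow>
     zeta0 Sig + (indicator {Sig_lo<..<Sig_hi} Sig * \<psi>) *\<^sub>R zeta_tilde psi C V bet gam t x)"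

definition Z0 :: "vec4 set" where "Z0 = {z. z $ 4 \<ge> 0}"

definition Z0_lin :: "(real \<Rightarrow> real \<Rightarrow> real \<Rightarrow> real) \<Rightarrow> real \<Rightarrow> real \<times> real \<times> real \<times> real \<Rightarrow> vec4 set" where
  "Z0_lin C t x = (case x of (S, A, M, Sig) \<Rightarrow>
     {z \<in> Z0. cvec C t x \<bullet> (z - zeta0 Sig) = 0})"

definition H1 :: "vec4 \<Rightarrow> vfun \<Rightarrow> cfun \<Rightarrow> cfun \<Rightarrow> real \<Rightarrow> real \<Rightarrow> real \<times> real \<times> real \<times> real \<Rightarrow> vec4 \<Rightarrow> real" where
  "H1 psi V bet gam \<psi> t x z = (case x of (S, A, M, Sig) \<Rightarrow>
     (1 / (2 * \<psi>)) * ((z - zeta0 Sig) \<bullet> Psi_inv_mul psi (z - zeta0 Sig))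
     - vvec V bet gam t x \<bullet> (z - zeta0 Sig))"

definition L1 :: "vec4 \<Rightarrow> (real \<Rightarrow> real \<Rightarrow> real \<Rightarrow> real) \<Rightarrow> vfun \<Rightarrow> cfun \<Rightarrow> cfun
                  \<Rightarrow> real \<Rightarrow> real \<Rightarrow> real \<times> real \<times> real \<times> real \<Rightarrow> vec4 \<Rightarrow> real \<Rightarrow> real \<Rightarrow> real" where
  "L1 psi C V bet gam \<psi> t x z l m = (case x of (S, A, M, Sig) \<Rightarrow>
     H1 psi V bet gam \<psi> t x z + l * (cvec C t x \<bullet> (z - zeta0 Sig)) - m * (e4 \<bullet> (z - zeta0 Sig)))"

definition frobenius_norm :: "real ^ 'n ^ 'm \<Rightarrow> real" where
  "frobenius_norm A = sqrt (\<Sum>i\<in>UNIV. \<Sum>j\<in>UNIV. (A $ i $ j)\<^sup>2)"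

definition mat2 :: "real \<Rightarrow> real \<Rightarrow> real \<Rightarrow> real \<Rightarrow> real ^ 2 ^ 2" where
  "mat2 a b c d = vector [vector [a, b], vector [c, d]]"

end

theory Submission
  imports Defs
begin

text \<open>For fixed (t, x) the problem is a separable quadratic programme in the deviation
  d = \<zeta> - \<zeta>0(\<Sigma>), weighted by \<Psi>, with one linear constraint c \<bullet> d = 0 and the sign constraint
  d4 \<ge> 0. For the residual w = v - \<lambda> c + \<mu> e4 one completes the square:
  H(\<zeta>0 + d) + \<lambda> c \<bullet> d - \<mu> d4 = |d - \<psi> \<Psi> w|^2 / (2\<psi>) - (\<psi>/2) w \<bullet> \<Psi> w, the norm
  being weighted by \<Psi>\<inverse>. The multipliers are chosen so that \<Psi> w satisfies the KKT
  conditions c \<bullet> \<Psi> w = 0, (\<Psi> w)4 \<ge> 0 and \<mu> (\<Psi> w)4 = 0. Hence \<psi> \<Psi> w is feasible and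
  minimises the Lagrangian, and w \<bullet> \<Psi> w = v \<bullet> \<Psi> w is the value g. The bounds follow from
  0 \<le> g \<le> v \<bullet> \<Psi> v, |\<Psi> w|^2 \<le> tr \<Psi> \<cdot> g, and from a Cauchy-Schwarz estimate for \<lambda>, which is a
  weighted least-squares coefficient; the bound on C_\<Sigma>\<Sigma> then controls the Frobenius norm of the
  scaled Hessian of the call.\<close>

section \<open>Weighted quadratic programmes\<close>

lemma vec4_nth [simp]:
  "vec4 a b c d $ 1 = a" "vec4 a b c d $ 2 = b" "vec4 a b c d $ 3 = c" "vec4 a b c d $ 4 = d"
  by (simp_all add: vec4_def vector_def)

lemma e4_nth: "e4 $ i = (if i = 4 then 1 else 0)"
  by (simp add: e4_def axis_def)

lemma inner_e4 [simp]: "e4 \<bullet> z = z $ 4" "z \<bullet> e4 = z $ 4"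
  by (simp_all add: e4_def inner_axis inner_commute)

lemma inner_Psi_mul: "x \<bullet> Psi_mul psi y = (\<Sum>i\<in>UNIV. psi $ i * x $ i * y $ i)"
  by (simp add: inner_vec_def Psi_mul_def mult_ac)

lemma sum_UNIV_remove4: "(\<Sum>i\<in>UNIV. f i) = f 4 + (\<Sum>i\<in>UNIV - {4}. f (i::4))"
  by (simp add: sum.remove)

locale positive_weights =
  fixes psi :: vec4
  assumes psi_pos: "\<And>i. 0 < psi $ i"
begin

lemma Psi_inv_mul_Psi_mul [simp]: "Psi_inv_mul psi (Psi_mul psi w) = w"
  using psi_pos by (simp add: vec_eq_iff Psi_inv_mul_def Psi_mul_def less_imp_neq[symmetric])

lemma weighted_square_nonneg: "0 \<le> w \<bullet> Psi_mul psi w"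
  unfolding inner_Psi_mul using psi_pos by (intro sum_nonneg) (simp add: mult.assoc less_imp_le)

lemma inverse_weighted_square_nonneg: "0 \<le> d \<bullet> Psi_inv_mul psi d"
  unfolding inner_vec_def Psi_inv_mul_def using psi_pos by (intro sum_nonneg) (simp add: less_imp_le)

lemma completing_square:
  assumes "r \<noteq> 0"
  shows "1 / (2 * r) * (d \<bullet> Psi_inv_mul psi d) - w \<bullet> d
       = 1 / (2 * r) * ((d - r *\<^sub>R Psi_mul psi w) \<bullet> Psi_inv_mul psi (d - r *\<^sub>R Psi_mul psi w))
         - r / 2 * (w \<bullet> Psi_mul psi w)"
proof -
  have "d$i * (d$i / psi$i) / (2 * r) - w$i * d$i
        = (d$i - r * (psi$i * w$i)) * ((d$i - r * (psi$i * w$i)) / psi$i) / (2 * r)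
          - r / 2 * (w$i * (psi$i * w$i))" for i
    using assms psi_pos[of i] by (simp add: field_simps power2_eq_square)
  then show ?thesis
    unfolding inner_vec_def Psi_inv_mul_def Psi_mul_def
    by (simp add: sum_divide_distrib sum_distrib_left mult.commute flip: sum_subtractf)
qed

lemma quadratic_lower_bound:
  assumes "0 < r"
  shows "- (r / 2) * (w \<bullet> Psi_mul psi w) \<le> 1 / (2 * r) * (d \<bullet> Psi_inv_mul psi d) - w \<bullet> d"
  using completing_square[of r d w] inverse_weighted_square_nonneg assms by simp

lemma quadratic_at_minimiser:
  assumes "r \<noteq> 0"
  shows "1 / (2 * r) * ((r *\<^sub>R Psi_mul psi w) \<bullet> Psi_inv_mul psi (r *\<^sub>R Psi_mul psi w))
           - w \<bullet> (r *\<^sub>R Psi_mul psi w) = - (r / 2) * (w \<bullet> Psi_mul psi w)"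
  using completing_square[of r "r *\<^sub>R Psi_mul psi w" w] assms by (simp add: Psi_inv_mul_def)

lemma weighted_square_le:
  assumes "\<And>i. \<bar>w $ i\<bar> \<le> K"
  shows "w \<bullet> Psi_mul psi w \<le> (\<Sum>i\<in>UNIV. psi $ i) * K\<^sup>2"
proof -
  have "psi$i * w$i * w$i \<le> psi$i * K\<^sup>2" for i
    using psi_pos[of i] assms[of i] abs_le_square_iff[of "w$i" K]
    by (simp add: mult.assoc power2_eq_square)
  then show ?thesis
    unfolding inner_Psi_mul sum_distrib_right by (rule sum_mono)
qed

lemma norm_Psi_mul_squared_le:
  "(norm (Psi_mul psi w))\<^sup>2 \<le> (\<Sum>i\<in>UNIV. psi $ i) * (w \<bullet> Psi_mul psi w)"
proof -
  have "(psi$i * w$i)\<^sup>2 \<le> (\<Sum>j\<in>UNIV. psi $ j) * (psi$i * w$i * w$i)" for i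
  proof -
    have "psi$i \<le> (\<Sum>j\<in>UNIV. psi $ j)"
      using psi_pos by (intro member_le_sum) (auto simp: less_imp_le)
    then have "psi$i * (psi$i * w$i * w$i) \<le> (\<Sum>j\<in>UNIV. psi $ j) * (psi$i * w$i * w$i)"
      using psi_pos[of i] by (intro mult_right_mono) (simp_all add: mult.assoc)
    then show ?thesis by (simp add: power2_eq_square mult_ac)
  qed
  then have "(\<Sum>i\<in>UNIV. (psi$i * w$i)\<^sup>2) \<le> (\<Sum>i\<in>UNIV. (\<Sum>j\<in>UNIV. psi $ j) * (psi$i * w$i * w$i))"
    by (rule sum_mono)
  moreover have "(norm (Psi_mul psi w))\<^sup>2 = (\<Sum>i\<in>UNIV. (psi$i * w$i)\<^sup>2)"
    unfolding power2_norm_eq_inner by (simp add: inner_vec_def Psi_mul_def power2_eq_square)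
  ultimately show ?thesis
    by (simp add: inner_Psi_mul sum_distrib_left)
qed

end

lemma weighted_quotient_bound:
  fixes p c u :: "'i \<Rightarrow> real" and m P K :: real
  assumes m: "0 < m"
    and p: "\<And>i. i \<in> I \<Longrightarrow> m \<le> p i \<and> p i \<le> P"
    and u: "\<And>i. i \<in> I \<Longrightarrow> \<bar>u i\<bar> \<le> K"
    and D: "0 < (\<Sum>i\<in>I. p i * (c i)\<^sup>2)"
  shows "\<bar>(\<Sum>i\<in>I. p i * c i * u i) / (\<Sum>i\<in>I. p i * (c i)\<^sup>2)\<bar> * (\<Sum>i\<in>I. \<bar>c i\<bar>)
           \<le> real (card I) * K * P / m"
proof -
  define N D s Q where "N = (\<Sum>i\<in>I. p i * c i * u i)" and "D = (\<Sum>i\<in>I. p i * (c i)\<^sup>2)"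
    and "s = (\<Sum>i\<in>I. \<bar>c i\<bar>)" and "Q = (\<Sum>i\<in>I. (c i)\<^sup>2)"
  have D_pos: "0 < D" using D by (simp add: D_def)
  then obtain i0 where "i0 \<in> I" unfolding D_def by (metis sum.empty less_irrefl ex_in_conv)
  then have KP: "0 \<le> K" "0 \<le> P" using u p m by (meson abs_ge_zero order_trans less_imp_le)+
  have "\<bar>N\<bar> \<le> (\<Sum>i\<in>I. \<bar>c i\<bar> * (P * K))"
    unfolding N_def
  proof (rule order_trans[OF sum_abs sum_mono])
    fix i assume "i \<in> I"
    with p[of i] u[of i] m have "p i * \<bar>u i\<bar> \<le> P * K" by (intro mult_mono) auto
    moreover have "\<bar>p i * c i * u i\<bar> = \<bar>c i\<bar> * (p i * \<bar>u i\<bar>)"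
      using \<open>i \<in> I\<close> p[of i] m by (simp add: abs_mult)
    ultimately show "\<bar>p i * c i * u i\<bar> \<le> \<bar>c i\<bar> * (P * K)"
      by (simp add: mult_left_mono)
  qed
  then have N: "\<bar>N\<bar> \<le> K * P * s" by (simp add: s_def sum_distrib_left mult_ac)
  have s2: "s\<^sup>2 \<le> real (card I) * Q"
    using sum_squared_le_sum_of_squares[of "\<lambda>i. \<bar>c i\<bar>" I] by (simp add: s_def Q_def mult.commute)
  have "m * Q \<le> D"
    unfolding Q_def D_def sum_distrib_left using p by (intro sum_mono mult_right_mono) auto
  then have Q: "Q \<le> D / m" using m by (simp add: field_simps)
  have "\<bar>N / D\<bar> * s = \<bar>N\<bar> * s / D" using D_pos by (simp add: abs_div)
  also have "\<dots> \<le> K * P * s\<^sup>2 / D"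
    using mult_right_mono[OF N, of s] D_pos by (intro divide_right_mono) (auto simp: power2_eq_square s_def)
  also have "\<dots> \<le> K * P * (real (card I) * (D / m)) / D"
    using s2 Q KP D_pos
    by (intro divide_right_mono mult_left_mono order_trans[OF s2]) auto
  also have "\<dots> = real (card I) * K * P / m" using D_pos by (simp add: field_simps)
  finally show ?thesis by (simp add: N_def D_def s_def)
qed

text \<open>The multiplier of the linear constraint is a weighted least-squares coefficient of v on c,
  taken over all coordinates, or over the first three when the sign constraint on the fourth
  coordinate is active.\<close>
definition weighted_regression :: "vec4 \<Rightarrow> vec4 \<Rightarrow> vec4 \<Rightarrow> 4 set \<Rightarrow> real" where
  "weighted_regression psi c v I =
     (\<Sum>i\<in>I. psi $ i * c $ i * v $ i) / (\<Sum>i\<in>I. psi $ i * (c $ i)\<^sup>2)"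

definition kkt_lambda :: "vec4 \<Rightarrow> vec4 \<Rightarrow> vec4 \<Rightarrow> real" where
  "kkt_lambda psi c v =
     (if weighted_regression psi c v UNIV * c $ 4 \<le> v $ 4 then weighted_regression psi c v UNIV
      else weighted_regression psi c v (UNIV - {4}))"

definition kkt_mu :: "vec4 \<Rightarrow> vec4 \<Rightarrow> vec4 \<Rightarrow> real" where
  "kkt_mu psi c v = max 0 (kkt_lambda psi c v * c $ 4 - v $ 4)"

definition kkt_residual :: "vec4 \<Rightarrow> vec4 \<Rightarrow> vec4 \<Rightarrow> vec4" where
  "kkt_residual psi c v = v - kkt_lambda psi c v *\<^sub>R c + kkt_mu psi c v *\<^sub>R e4"

definition kkt_control :: "vec4 \<Rightarrow> vec4 \<Rightarrow> vec4 \<Rightarrow> vec4" where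
  "kkt_control psi c v = Psi_mul psi (kkt_residual psi c v)"

lemma weighted_regression_UNIV:
  "weighted_regression psi c v UNIV = (c \<bullet> Psi_mul psi v) / (c \<bullet> Psi_mul psi c)"
  by (simp add: weighted_regression_def inner_Psi_mul power2_eq_square mult.assoc)

lemma weighted_regression_drop4:
  "weighted_regression psi c v (UNIV - {4})
     = (c \<bullet> Psi_mul psi v - psi $ 4 * c $ 4 * v $ 4) / (c \<bullet> Psi_mul psi c - psi $ 4 * (c $ 4)\<^sup>2)"
proof -
  have "(\<Sum>i\<in>UNIV. psi $ i * c $ i * v $ i)
        = psi $ 4 * c $ 4 * v $ 4 + (\<Sum>i\<in>UNIV - {4}. psi $ i * c $ i * v $ i)"
    by (rule sum_UNIV_remove4)
  moreover have "(\<Sum>i\<in>UNIV. psi $ i * c $ i * c $ i)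
        = psi $ 4 * c $ 4 * c $ 4 + (\<Sum>i\<in>UNIV - {4}. psi $ i * c $ i * c $ i)"
    by (rule sum_UNIV_remove4)
  ultimately show ?thesis
    by (simp add: weighted_regression_def inner_Psi_mul power2_eq_square mult.assoc)
qed

locale weighted_kkt = positive_weights +
  fixes c v :: vec4
  assumes c1_nonzero: "c $ 1 \<noteq> 0"
begin

lemma regression_denominator_pos:
  assumes "1 \<in> I"
  shows "0 < (\<Sum>i\<in>I. psi $ i * (c $ i)\<^sup>2)"
proof -
  have "0 < psi $ 1 * (c $ 1)\<^sup>2" using psi_pos c1_nonzero by simp
  also have "\<dots> \<le> (\<Sum>i\<in>I. psi $ i * (c $ i)\<^sup>2)"
    using assms psi_pos by (intro member_le_sum) (auto simp: less_imp_le)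
  finally show ?thesis .
qed

lemma regression_normal_equation:
  assumes "1 \<in> I"
  shows "(\<Sum>i\<in>I. psi $ i * c $ i * (v $ i - weighted_regression psi c v I * c $ i)) = 0"
proof -
  define q where "q = weighted_regression psi c v I"
  have "(\<Sum>i\<in>I. psi $ i * c $ i * (v $ i - q * c $ i))
        = (\<Sum>i\<in>I. psi $ i * c $ i * v $ i) - q * (\<Sum>i\<in>I. psi $ i * (c $ i)\<^sup>2)"
    by (simp add: sum_subtractf sum_distrib_left algebra_simps power2_eq_square)
  then show ?thesis
    using regression_denominator_pos[OF assms] by (simp add: q_def weighted_regression_def)
qed

lemma restricted_regression_exceeds:
  assumes "v $ 4 < weighted_regression psi c v UNIV * c $ 4"
  shows "v $ 4 < weighted_regression psi c v (UNIV - {4}) * c $ 4"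
proof -
  define A B where "A = (\<Sum>i\<in>UNIV - {4}. psi $ i * c $ i * v $ i)"
    and "B = (\<Sum>i\<in>UNIV - {4}. psi $ i * (c $ i)\<^sup>2)"
  have B: "0 < B" unfolding B_def by (rule regression_denominator_pos) simp
  have B4: "0 < psi $ 4 * (c $ 4)\<^sup>2 + B" using B psi_pos[of 4] by (simp add: add_nonneg_pos)
  have "(\<Sum>i\<in>UNIV. psi $ i * c $ i * v $ i) = psi $ 4 * c $ 4 * v $ 4 + A"
    unfolding A_def by (rule sum_UNIV_remove4)
  moreover have "(\<Sum>i\<in>UNIV. psi $ i * (c $ i)\<^sup>2) = psi $ 4 * (c $ 4)\<^sup>2 + B"
    unfolding B_def by (rule sum_UNIV_remove4)
  ultimately have "v $ 4 * (psi $ 4 * (c $ 4)\<^sup>2 + B) < (psi $ 4 * c $ 4 * v $ 4 + A) * c $ 4"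
    using assms B4 by (simp add: weighted_regression_def field_simps)
  then have "v $ 4 * B < A * c $ 4" by (simp add: algebra_simps power2_eq_square)
  then show ?thesis using B by (simp add: weighted_regression_def A_def B_def field_simps)
qed

lemma kkt_cases:
  obtains (inactive) "kkt_lambda psi c v = weighted_regression psi c v UNIV" "kkt_mu psi c v = 0"
      "kkt_lambda psi c v * c $ 4 \<le> v $ 4"
  | (active) "kkt_lambda psi c v = weighted_regression psi c v (UNIV - {4})"
      "kkt_mu psi c v = kkt_lambda psi c v * c $ 4 - v $ 4"
proof (cases "weighted_regression psi c v UNIV * c $ 4 \<le> v $ 4")
  case True
  then show ?thesis by (intro inactive) (simp_all add: kkt_lambda_def kkt_mu_def)
next
  case False
  then have "v $ 4 < kkt_lambda psi c v * c $ 4"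
    using restricted_regression_exceeds by (simp add: kkt_lambda_def)
  with False show ?thesis by (intro active) (simp_all add: kkt_lambda_def kkt_mu_def)
qed

lemma kkt_control_eq:
  "kkt_control psi c v
     = Psi_mul psi (v - kkt_lambda psi c v *\<^sub>R c) + (psi $ 4 * kkt_mu psi c v) *\<^sub>R e4"
  by (simp add: vec_eq_iff kkt_control_def kkt_residual_def Psi_mul_def e4_nth algebra_simps)

lemma kkt_conditions:
  "c \<bullet> kkt_control psi c v = 0" "0 \<le> kkt_control psi c v $ 4"
  "kkt_mu psi c v * kkt_control psi c v $ 4 = 0"
proof -
  define l m where "l = kkt_lambda psi c v" and "m = kkt_mu psi c v"
  define r where "r i = psi $ i * c $ i * (v $ i - l * c $ i)" for i
  have cz: "c \<bullet> kkt_control psi c v = (\<Sum>i\<in>UNIV. r i) + psi $ 4 * m * c $ 4"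
    by (simp add: kkt_control_eq inner_add_right inner_Psi_mul r_def l_def m_def)
  have z4: "kkt_control psi c v $ 4 = psi $ 4 * (v $ 4 - l * c $ 4 + m)"
    by (simp add: kkt_control_eq Psi_mul_def e4_nth l_def m_def algebra_simps)
  have "c \<bullet> kkt_control psi c v = 0 \<and> 0 \<le> kkt_control psi c v $ 4 \<and> m * kkt_control psi c v $ 4 = 0"
  proof (cases rule: kkt_cases)
    case inactive
    then have "(\<Sum>i\<in>UNIV. r i) = 0"
      using regression_normal_equation[of UNIV] by (simp add: r_def l_def)
    with inactive psi_pos[of 4] show ?thesis by (simp add: cz z4 l_def m_def)
  next
    case active
    then have "(\<Sum>i\<in>UNIV - {4}. r i) = 0"
      using regression_normal_equation[of "UNIV - {4}"] by (simp add: r_def l_def)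
    then have "(\<Sum>i\<in>UNIV. r i) = r 4" by (simp add: sum_UNIV_remove4[of r])
    also have "\<dots> = - psi $ 4 * m * c $ 4"
      using active(2) by (simp add: r_def flip: l_def m_def) (simp add: algebra_simps)
    finally show ?thesis using active by (simp add: cz z4 l_def m_def)
  qed
  then show "c \<bullet> kkt_control psi c v = 0" "0 \<le> kkt_control psi c v $ 4"
    "kkt_mu psi c v * kkt_control psi c v $ 4 = 0" by (simp_all add: m_def)
qed

lemma residual_inner_control:
  "kkt_residual psi c v \<bullet> kkt_control psi c v = v \<bullet> kkt_control psi c v"
  using kkt_conditions(1,3) by (simp add: kkt_residual_def inner_diff_left inner_add_left)

lemma weighted_square_residual:
  "kkt_residual psi c v \<bullet> Psi_mul psi (kkt_residual psi c v) = v \<bullet> kkt_control psi c v"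
  using residual_inner_control by (simp add: kkt_control_def)

lemma lagrangian_lower_bound:
  assumes "0 < r"
  shows "- (1/2) * (v \<bullet> kkt_control psi c v) * r
           \<le> 1 / (2 * r) * (d \<bullet> Psi_inv_mul psi d) - v \<bullet> d
             + kkt_lambda psi c v * (c \<bullet> d) - kkt_mu psi c v * (e4 \<bullet> d)"
proof -
  have "1 / (2 * r) * (d \<bullet> Psi_inv_mul psi d) - v \<bullet> d
          + kkt_lambda psi c v * (c \<bullet> d) - kkt_mu psi c v * (e4 \<bullet> d)
        = 1 / (2 * r) * (d \<bullet> Psi_inv_mul psi d) - kkt_residual psi c v \<bullet> d"
    by (simp add: kkt_residual_def inner_diff_left inner_add_left)
  then show ?thesis
    using quadratic_lower_bound[OF assms, of "kkt_residual psi c v" d]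
    by (simp add: weighted_square_residual mult.commute)
qed

lemma feasible_lower_bound:
  assumes "0 < r" and "c \<bullet> d = 0" and "0 \<le> d $ 4"
  shows "- (1/2) * (v \<bullet> kkt_control psi c v) * r \<le> 1 / (2 * r) * (d \<bullet> Psi_inv_mul psi d) - v \<bullet> d"
proof -
  have "0 \<le> kkt_mu psi c v * (e4 \<bullet> d)" using assms(3) by (simp add: kkt_mu_def)
  then show ?thesis using lagrangian_lower_bound[OF assms(1), of d] assms(2) by simp
qed

lemma quadratic_at_kkt_control:
  assumes "r \<noteq> 0"
  shows "1 / (2 * r) * ((r *\<^sub>R kkt_control psi c v) \<bullet> Psi_inv_mul psi (r *\<^sub>R kkt_control psi c v))
           - v \<bullet> (r *\<^sub>R kkt_control psi c v) = - (1/2) * (v \<bullet> kkt_control psi c v) * r"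
  using quadratic_at_minimiser[OF assms, of "kkt_residual psi c v"] residual_inner_control
    weighted_square_residual
  by (simp add: kkt_control_def)

lemma kkt_value_nonneg: "0 \<le> v \<bullet> kkt_control psi c v"
  using weighted_square_nonneg weighted_square_residual by metis

lemma kkt_value_le: "v \<bullet> kkt_control psi c v \<le> v \<bullet> Psi_mul psi v"
  using quadratic_lower_bound[of 1 v "kkt_control psi c v"] weighted_square_residual
    residual_inner_control
  by (simp add: kkt_control_def inner_commute)

lemma norm_kkt_control_squared_le:
  "(norm (kkt_control psi c v))\<^sup>2 \<le> (\<Sum>i\<in>UNIV. psi $ i) * (v \<bullet> kkt_control psi c v)"
  using norm_Psi_mul_squared_le[of "kkt_residual psi c v"] weighted_square_residual
  by (simp add: kkt_control_def)

lemma kkt_lambda_bound: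
  assumes v: "\<And>i. \<bar>v $ i\<bar> \<le> K"
  shows "\<bar>kkt_lambda psi c v\<bar> * (\<bar>c $ 1\<bar> + \<bar>c $ 2\<bar> + \<bar>c $ 3\<bar>)
           \<le> 4 * K * (\<Sum>i\<in>UNIV. psi $ i) / (MIN i. psi $ i)"
proof -
  define P m where "P = (\<Sum>i\<in>UNIV. psi $ i)" and "m = (MIN i. psi $ i)"
  have m: "0 < m" using psi_pos by (simp add: m_def)
  have p: "m \<le> psi $ i \<and> psi $ i \<le> P" for i
    using psi_pos by (auto simp: m_def P_def less_imp_le intro: member_le_sum)
  have K: "0 \<le> K" using v[of 1] by linarith
  have bound: "\<bar>weighted_regression psi c v I\<bar> * (\<bar>c $ 1\<bar> + \<bar>c $ 2\<bar> + \<bar>c $ 3\<bar>) \<le> 4 * K * P / m"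
    if I: "{1, 2, 3} \<subseteq> I" for I
  proof -
    have "\<bar>c $ 1\<bar> + \<bar>c $ 2\<bar> + \<bar>c $ 3\<bar> = (\<Sum>i\<in>{1, 2, 3}. \<bar>c $ i\<bar>)" by simp
    also have "\<dots> \<le> (\<Sum>i\<in>I. \<bar>c $ i\<bar>)" using I by (intro sum_mono2) auto
    finally have s: "\<bar>c $ 1\<bar> + \<bar>c $ 2\<bar> + \<bar>c $ 3\<bar> \<le> (\<Sum>i\<in>I. \<bar>c $ i\<bar>)" .
    have "real (card I) \<le> 4" using card_mono[of UNIV I] by simp
    then have "real (card I) * K * P / m \<le> 4 * K * P / m"
      using K p[of 1] m by (intro divide_right_mono mult_right_mono) auto
    moreover have "\<bar>weighted_regression psi c v I\<bar> * (\<Sum>i\<in>I. \<bar>c $ i\<bar>) \<le> real (card I) * K * P / m"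
      unfolding weighted_regression_def
      using I p v m regression_denominator_pos[of I] by (intro weighted_quotient_bound) auto
    ultimately show ?thesis
      using mult_left_mono[OF s abs_ge_zero[of "weighted_regression psi c v I"]] by linarith
  qed
  show ?thesis
    by (cases rule: kkt_cases) (use bound in \<open>auto simp: P_def m_def\<close>)
qed

end

section \<open>Affine bounds in L^2\<close>

text \<open>No measurability of the integrand is assumed: the path functionals
  \<omega> \<mapsto> \<integral> |K(t, X_t)|^2 dt need not be measurable, so the additivity of the
  integral is only available as an inequality against simple functions.\<close>

lemma nn_integral_add_simple_le:
  assumes u: "simple_function M u"
  shows "(\<integral>\<^sup>+x. u x + g x \<partial>M) \<le> integral\<^sup>N M u + integral\<^sup>N M g"
  unfolding nn_integral_def[of M "\<lambda>x. u x + g x"]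
proof (rule SUP_least)
  fix h assume "h \<in> {h. simple_function M h \<and> h \<le> (\<lambda>x. u x + g x)}"
  then have h: "simple_function M h" "\<And>x. h x \<le> u x + g x" by (auto simp: le_fun_def)
  define h' where "h' = (\<lambda>x. if u x = top then 0 else h x - u x)"
  have sh': "simple_function M h'" unfolding h'_def
    using simple_function_compose2[OF h(1) u, of "\<lambda>a b. if b = top then 0 else a - b"] by simp
  have "h x \<le> u x + h' x" for x
    by (cases "u x = top"; cases "u x \<le> h x")
      (simp_all add: h'_def add_diff_inverse_ennreal add_increasing2)
  then have "integral\<^sup>S M h \<le> integral\<^sup>S M u + integral\<^sup>S M h'"
    using simple_integral_mono[OF h(1), of "\<lambda>x. u x + h' x"] u sh' by simp
  also have "\<dots> \<le> integral\<^sup>N M u + integral\<^sup>N M g"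
    using h(2) u sh'
    by (auto simp: nn_integral_eq_simple_integral[symmetric] h'_def ennreal_minus_le_iff
        intro!: add_left_mono nn_integral_mono)
  finally show "integral\<^sup>S M h \<le> integral\<^sup>N M u + integral\<^sup>N M g" .
qed

lemma nn_integral_cmult_le:
  fixes c :: ennreal
  assumes "c \<noteq> top"
  shows "(\<integral>\<^sup>+x. c * g x \<partial>M) \<le> c * integral\<^sup>N M g"
proof (cases "c = 0")
  case False
  show ?thesis
    unfolding nn_integral_def[of M "\<lambda>x. c * g x"]
  proof (rule SUP_least)
    fix h assume "h \<in> {h. simple_function M h \<and> h \<le> (\<lambda>x. c * g x)}"
    then have h: "simple_function M h" "\<And>x. h x \<le> c * g x" by (auto simp: le_fun_def)
    define h' where "h' = (\<lambda>x. h x / c)"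
    have sh': "simple_function M h'" unfolding h'_def
      using simple_function_compose1[OF h(1), of "\<lambda>a. a / c"] by simp
    have cancel: "y * c / c = y" for y
      using False assms by (rule mult_divide_eq_ennreal)
    have "h = (\<lambda>x. c * h' x)"
      using cancel by (simp add: fun_eq_iff h'_def ennreal_times_divide) (metis mult.commute)
    then have "integral\<^sup>S M h = c * integral\<^sup>N M h'"
      using sh' by (simp add: nn_integral_eq_simple_integral)
    also have "\<dots> \<le> c * integral\<^sup>N M g"
    proof (intro mult_left_mono nn_integral_mono)
      fix x
      show "h' x \<le> g x"
        using divide_right_mono_ennreal[OF h(2), of x c] cancel[of "g x"]
        by (simp add: h'_def mult.commute)
    qed simp
    finally show "integral\<^sup>S M h \<le> c * integral\<^sup>N M g" .
  qed
qed simp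

lemma nn_integral_simple_add_cmult_le:
  assumes "simple_function M u" and "c \<noteq> top"
  shows "(\<integral>\<^sup>+x. u x + c * g x \<partial>M) \<le> integral\<^sup>N M u + c * integral\<^sup>N M g"
  using nn_integral_add_simple_le[OF assms(1), of "\<lambda>x. c * g x"]
    add_left_mono[OF nn_integral_cmult_le[OF assms(2)]]
  by (rule order_trans)

lemma affine_square_le: "\<bar>a + b * \<bar>y\<bar>\<bar> powr 2 \<le> 2 * a\<^sup>2 + 2 * b\<^sup>2 * \<bar>y\<bar> powr 2"
  for a b y :: real
  using zero_le_power2[of "a - b * \<bar>y\<bar>"] by (simp add: power2_eq_square algebra_simps)

lemma set_nn_integral_affine_square_le:
  fixes f :: "real \<Rightarrow> real"
  assumes "0 \<le> T"
  shows "(\<integral>\<^sup>+ t\<in>{0..T}. ennreal (\<bar>a + b * \<bar>f t\<bar>\<bar> powr 2) \<partial>lborel)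
           \<le> ennreal (2 * a\<^sup>2 * T) + ennreal (2 * b\<^sup>2) * (\<integral>\<^sup>+ t\<in>{0..T}. ennreal (\<bar>f t\<bar> powr 2) \<partial>lborel)"
proof -
  have "ennreal (\<bar>a + b * \<bar>y\<bar>\<bar> powr 2) \<le> ennreal (2 * a\<^sup>2) + ennreal (2 * b\<^sup>2) * ennreal (\<bar>y\<bar> powr 2)"
    for y
    using ennreal_leI[OF affine_square_le[of a b y]] by (simp add: ennreal_plus ennreal_mult)
  then have "(\<integral>\<^sup>+ t\<in>{0..T}. ennreal (\<bar>a + b * \<bar>f t\<bar>\<bar> powr 2) \<partial>lborel)
      \<le> (\<integral>\<^sup>+ t. ennreal (2 * a\<^sup>2) * indicator {0..T} t
            + ennreal (2 * b\<^sup>2) * (ennreal (\<bar>f t\<bar> powr 2) * indicator {0..T} t) \<partial>lborel)"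
    by (intro nn_integral_mono) (auto simp: indicator_def)
  also have "\<dots> \<le> (\<integral>\<^sup>+ t. ennreal (2 * a\<^sup>2) * indicator {0..T} t \<partial>lborel)
      + ennreal (2 * b\<^sup>2) * (\<integral>\<^sup>+ t\<in>{0..T}. ennreal (\<bar>f t\<bar> powr 2) \<partial>lborel)"
    by (intro nn_integral_simple_add_cmult_le) auto
  also have "\<dots> = ennreal (2 * a\<^sup>2 * T)
      + ennreal (2 * b\<^sup>2) * (\<integral>\<^sup>+ t\<in>{0..T}. ennreal (\<bar>f t\<bar> powr 2) \<partial>lborel)"
    using assms by (simp add: nn_integral_cmult_indicator ennreal_mult)
  finally show ?thesis .
qed

lemma Lp_P_affine_abs:
  assumes L: "Lp_P T Pf 2 K" and probs: "\<forall>P\<in>Pf. prob_space P" and T: "0 \<le> T"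
  shows "Lp_P T Pf 2 (\<lambda>t x. a + b * \<bar>K t x\<bar>)"
proof -
  obtain B where B: "\<And>P. P \<in> Pf \<Longrightarrow>
      (\<integral>\<^sup>+ \<omega>. (\<integral>\<^sup>+ t\<in>{0..T}. ennreal (\<bar>K t (X_proc \<omega> t)\<bar> powr 2) \<partial>lborel) \<partial>P) \<le> ennreal B"
    using L unfolding Lp_P_def by blast
  have m: "(\<lambda>(t, x). K t x) \<in> borel_measurable borel" using L unfolding Lp_P_def by blast
  have e: "(\<lambda>(t, x). a + b * \<bar>K t x\<bar>) = (\<lambda>p. a + b * \<bar>(\<lambda>(t, x). K t x) p\<bar>)"
    by (auto simp: fun_eq_iff)
  have meas: "(\<lambda>(t, x). a + b * \<bar>K t x\<bar>) \<in> borel_measurable borel"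
    unfolding e using m by measurable
  have "(\<integral>\<^sup>+ \<omega>. (\<integral>\<^sup>+ t\<in>{0..T}. ennreal (\<bar>a + b * \<bar>K t (X_proc \<omega> t)\<bar>\<bar> powr 2) \<partial>lborel) \<partial>P)
          \<le> ennreal (2 * a\<^sup>2 * T + 2 * b\<^sup>2 * max B 0)" if P: "P \<in> Pf" for P
  proof -
    interpret prob_space P using probs P by auto
    define I where "I \<omega> = (\<integral>\<^sup>+ t\<in>{0..T}. ennreal (\<bar>K t (X_proc \<omega> t)\<bar> powr 2) \<partial>lborel)" for \<omega>
    have "(\<integral>\<^sup>+ \<omega>. (\<integral>\<^sup>+ t\<in>{0..T}. ennreal (\<bar>a + b * \<bar>K t (X_proc \<omega> t)\<bar>\<bar> powr 2) \<partial>lborel) \<partial>P)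
       \<le> (\<integral>\<^sup>+ \<omega>. ennreal (2 * a\<^sup>2 * T) + ennreal (2 * b\<^sup>2) * I \<omega> \<partial>P)"
      unfolding I_def by (intro nn_integral_mono set_nn_integral_affine_square_le T)
    also have "\<dots> \<le> ennreal (2 * a\<^sup>2 * T) + ennreal (2 * b\<^sup>2) * integral\<^sup>N P I"
      using nn_integral_simple_add_cmult_le[of P "\<lambda>_. ennreal (2 * a\<^sup>2 * T)" "ennreal (2 * b\<^sup>2)" I]
      by (simp add: emeasure_space_1)
    also have "\<dots> \<le> ennreal (2 * a\<^sup>2 * T) + ennreal (2 * b\<^sup>2) * ennreal (max B 0)"
      using B[OF P] unfolding I_def
      by (intro add_left_mono mult_left_mono) (auto intro: order_trans ennreal_leI)
    also have "\<dots> = ennreal (2 * a\<^sup>2 * T + 2 * b\<^sup>2 * max B 0)"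
      using T by (simp add: ennreal_plus ennreal_mult)
    finally show ?thesis .
  qed
  then show ?thesis unfolding Lp_P_def using meas by blast
qed

section \<open>The candidate control\<close>

lemma lam_eq_kkt_lambda: "lam psi C V bet gam t x = kkt_lambda psi (cvec C t x) (vvec V bet gam t x)"
  by (simp add: lam_def kkt_lambda_def Let_def weighted_regression_UNIV weighted_regression_drop4
      power2_eq_square mult_ac)

lemma mu_eq_kkt_mu: "mu psi C V bet gam t x = kkt_mu psi (cvec C t x) (vvec V bet gam t x)"
  by (simp add: mu_def kkt_mu_def Let_def lam_eq_kkt_lambda max_def algebra_simps)

lemma zeta_tilde_eq_kkt_control:
  "zeta_tilde psi C V bet gam t x = kkt_control psi (cvec C t x) (vvec V bet gam t x)"
  by (simp add: zeta_tilde_def kkt_control_def kkt_residual_def lam_eq_kkt_lambda mu_eq_kkt_mu)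

lemma vvec_component_bound:
  assumes "0 \<le> Sig" "Sig \<le> Sig_hi"
    and "\<bar>V_Sig V t S A M Sig\<bar> \<le> K_V \<and>
         \<bar>bet t S A M * V_A V t S A M Sig + S\<^sup>2 * Gamma_V V gam t S A M Sig\<bar> \<le> K_V \<and>
         \<bar>S * dDelta_dSig V gam t S A M Sig\<bar> \<le> K_V \<and> \<bar>V_SigSig V t S A M Sig\<bar> \<le> K_V"
  shows "\<bar>vvec V bet gam t (S, A, M, Sig) $ i\<bar> \<le> (1 + Sig_hi) * K_V"
proof -
  have K: "0 \<le> K_V" using assms(3) by linarith
  have scaled: "\<bar>Sig * y\<bar> \<le> (1 + Sig_hi) * K_V" if "\<bar>y\<bar> \<le> K_V" for y
  proof -
    have "\<bar>Sig * y\<bar> \<le> Sig_hi * K_V" using assms(1,2) that K by (simp add: abs_mult mult_mono)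
    then show ?thesis using K by (simp add: algebra_simps)
  qed
  have plain: "y \<le> K_V \<Longrightarrow> y \<le> (1 + Sig_hi) * K_V" for y
    using K assms(1,2) by (simp add: algebra_simps) (meson add_increasing2 mult_nonneg_nonneg order_trans)
  have "\<bar>V_SigSig V t S A M Sig / 2\<bar> \<le> K_V" using assms(3) K by simp
  then show ?thesis
    using exhaust_4[of i] assms(3) scaled plain
    by (auto simp: vvec_def mult.assoc simp del: abs_divide)
qed

lemma frobenius_mat2_le: "frobenius_norm (mat2 a b c d) \<le> \<bar>a\<bar> + \<bar>b\<bar> + \<bar>c\<bar> + \<bar>d\<bar>"
proof -
  have "a\<^sup>2 + b\<^sup>2 + c\<^sup>2 + d\<^sup>2 \<le> (\<bar>a\<bar> + \<bar>b\<bar> + \<bar>c\<bar> + \<bar>d\<bar>)\<^sup>2"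
    by (simp add: power2_eq_square algebra_simps)
  then show ?thesis
    by (simp add: frobenius_norm_def mat2_def sum_2 add.assoc real_le_lsqrt)
qed

lemma frobenius_scaled_hessian_le:
  assumes Sig: "0 < Sig_lo" "Sig_lo \<le> Sig"
    and Kc: "\<bar>C_SigSig C t S Sig\<bar> \<le> Kc *
               (\<bar>C_Sig C t S Sig\<bar> + \<bar>S\<^sup>2 * C_SS C t S Sig\<bar> + \<bar>S * C_SSig C t S Sig\<bar>)"
  shows "frobenius_norm (mat2 (S\<^sup>2 * C_SS C t S Sig) (S * C_SSig C t S Sig)
                               (S * C_SSig C t S Sig) (C_SigSig C t S Sig))
           \<le> (2 + \<bar>Kc\<bar>) * (1 + 1 / Sig_lo) *
              (\<bar>cvec C t (S, A, M, Sig) $ 1\<bar> + \<bar>cvec C t (S, A, M, Sig) $ 2\<bar>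
               + \<bar>cvec C t (S, A, M, Sig) $ 3\<bar>)"
proof -
  define a b d c1 where "a = S\<^sup>2 * C_SS C t S Sig" and "b = S * C_SSig C t S Sig"
    and "d = C_SigSig C t S Sig" and "c1 = C_Sig C t S Sig"
  define s where "s = \<bar>c1\<bar> + \<bar>a\<bar> + \<bar>b\<bar>"
  have s0: "0 \<le> s" by (simp add: s_def)
  have "\<bar>d\<bar> \<le> \<bar>Kc\<bar> * s"
    using Kc order_trans[OF _ mult_right_mono[OF abs_ge_self s0]]
    by (simp add: d_def s_def a_def b_def c1_def)
  then have "frobenius_norm (mat2 a b b d) \<le> (2 + \<bar>Kc\<bar>) * s"
    using frobenius_mat2_le[of a b b d] abs_ge_zero[of a] abs_ge_zero[of b] abs_ge_zero[of c1]
    by (simp add: s_def algebra_simps) linarith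
  moreover have "s \<le> (1 + 1 / Sig_lo) *
      (\<bar>cvec C t (S, A, M, Sig) $ 1\<bar> + \<bar>cvec C t (S, A, M, Sig) $ 2\<bar> + \<bar>cvec C t (S, A, M, Sig) $ 3\<bar>)"
  proof -
    have "Sig_lo * \<bar>y\<bar> \<le> \<bar>Sig * y\<bar>" for y using Sig by (simp add: abs_mult mult_right_mono)
    then have "\<bar>y\<bar> \<le> \<bar>Sig * y\<bar> / Sig_lo" for y using Sig(1) by (metis pos_le_divide_eq mult.commute)
    from this[of a] this[of b]
    have ab: "\<bar>a\<bar> + \<bar>b\<bar> \<le> \<bar>Sig * a\<bar> / Sig_lo + \<bar>Sig * b\<bar> / Sig_lo" by simp
    have "cvec C t (S, A, M, Sig) $ 1 = c1" "cvec C t (S, A, M, Sig) $ 2 = Sig * a"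
      "cvec C t (S, A, M, Sig) $ 3 = Sig * b"
      by (simp_all add: cvec_def a_def b_def c1_def mult.assoc)
    moreover have "(1 + 1 / Sig_lo) * (\<bar>c1\<bar> + \<bar>Sig * a\<bar> + \<bar>Sig * b\<bar>)
        = \<bar>c1\<bar> + \<bar>Sig * a\<bar> + \<bar>Sig * b\<bar> + (\<bar>c1\<bar> / Sig_lo + \<bar>Sig * a\<bar> / Sig_lo + \<bar>Sig * b\<bar> / Sig_lo)"
      by (simp add: algebra_simps add_divide_distrib)
    moreover have "0 \<le> \<bar>c1\<bar> / Sig_lo" using Sig(1) by simp
    ultimately show ?thesis
      using ab abs_ge_zero[of "Sig * a"] abs_ge_zero[of "Sig * b"] by (simp only: s_def)
  qed
  ultimately have "frobenius_norm (mat2 a b b d) \<le> (2 + \<bar>Kc\<bar>) * ((1 + 1 / Sig_lo) *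
      (\<bar>cvec C t (S, A, M, Sig) $ 1\<bar> + \<bar>cvec C t (S, A, M, Sig) $ 2\<bar> + \<bar>cvec C t (S, A, M, Sig) $ 3\<bar>))"
    by (smt (verit) mult_left_mono abs_ge_zero)
  then show ?thesis by (simp add: a_def b_def d_def mult.assoc)
qed

lemma H1_eq:
  "H1 psi V bet gam \<psi> t (S, A, M, Sig) z
     = 1 / (2 * \<psi>) * ((z - zeta0 Sig) \<bullet> Psi_inv_mul psi (z - zeta0 Sig))
       - vvec V bet gam t (S, A, M, Sig) \<bullet> (z - zeta0 Sig)"
  by (simp add: H1_def)

lemma Z0_lin_iff:
  "z \<in> Z0_lin C t (S, A, M, Sig) \<longleftrightarrow>
     cvec C t (S, A, M, Sig) \<bullet> (z - zeta0 Sig) = 0 \<and> 0 \<le> (z - zeta0 Sig) $ 4"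
  by (auto simp: Z0_lin_def Z0_def zeta0_def)

locale candidate_control =
  fixes T Sig_lo Sig_hi :: real and psi :: vec4 and C :: "real \<Rightarrow> real \<Rightarrow> real \<Rightarrow> real"
    and V :: vfun and bet gam :: cfun
  assumes psi_pos: "\<forall>i. 0 < psi $ i"
    and C_Sig_nz: "\<And>t S A M Sig. in_D T Sig_lo Sig_hi t (S, A, M, Sig) \<Longrightarrow> C_Sig C t S Sig \<noteq> 0"
begin

lemma weighted_kkt_at: "in_D T Sig_lo Sig_hi t x \<Longrightarrow> weighted_kkt psi (cvec C t x)"
  by (cases x) (unfold_locales, use psi_pos C_Sig_nz in \<open>auto simp: cvec_def\<close>)

lemma candidate_control_optimal:
  assumes D: "in_D T Sig_lo Sig_hi t x" and \<psi>: "0 < \<psi>"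
  shows "(let z_star = zeta0 (snd (snd (snd x))) + \<psi> *\<^sub>R zeta_tilde psi C V bet gam t x;
             val = - (1/2) * g_tilde psi C V bet gam t x * \<psi>
         in z_star \<in> Z0_lin C t x \<and> H1 psi V bet gam \<psi> t x z_star = val \<and>
            (\<forall>z\<in>Z0_lin C t x. val \<le> H1 psi V bet gam \<psi> t x z)) \<and>
        cvec C t x \<bullet> zeta_tilde psi C V bet gam t x = 0 \<and>
        e4 \<bullet> zeta_tilde psi C V bet gam t x \<ge> 0"
proof -
  obtain S A M Sig where x: "x = (S, A, M, Sig)" by (cases x)
  interpret weighted_kkt psi "cvec C t x" "vvec V bet gam t x" using weighted_kkt_at[OF D] .
  show ?thesis
    using kkt_conditions quadratic_at_kkt_control[of \<psi>] feasible_lower_bound[OF \<psi>] \<psi>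
    by (simp add: Let_def x H1_eq Z0_lin_iff g_tilde_def zeta_tilde_eq_kkt_control)
qed

lemma candidate_multipliers:
  assumes D: "in_D T Sig_lo Sig_hi t x" and \<psi>: "0 < \<psi>"
  shows "- (1/2) * g_tilde psi C V bet gam t x * \<psi> =
           (INF z. L1 psi C V bet gam \<psi> t x z (lam psi C V bet gam t x) (mu psi C V bet gam t x))"
proof -
  obtain S A M Sig where x: "x = (S, A, M, Sig)" by (cases x)
  interpret weighted_kkt psi "cvec C t x" "vvec V bet gam t x" using weighted_kkt_at[OF D] .
  define f where "f z = L1 psi C V bet gam \<psi> t x z (lam psi C V bet gam t x) (mu psi C V bet gam t x)"
    for z
  have f: "f z = 1 / (2 * \<psi>) * ((z - zeta0 Sig) \<bullet> Psi_inv_mul psi (z - zeta0 Sig))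
      - vvec V bet gam t x \<bullet> (z - zeta0 Sig)
      + kkt_lambda psi (cvec C t x) (vvec V bet gam t x) * (cvec C t x \<bullet> (z - zeta0 Sig))
      - kkt_mu psi (cvec C t x) (vvec V bet gam t x) * (e4 \<bullet> (z - zeta0 Sig))" for z
    by (simp add: f_def L1_def x H1_eq lam_eq_kkt_lambda mu_eq_kkt_mu)
  have "Inf (range f) = - (1/2) * g_tilde psi C V bet gam t x * \<psi>"
  proof (rule cInf_eq_minimum)
    show "- (1/2) * g_tilde psi C V bet gam t x * \<psi> \<in> range f"
      using quadratic_at_kkt_control[of \<psi>] kkt_conditions(1,3) \<psi>
      by (intro range_eqI[of _ _ "zeta0 Sig + \<psi> *\<^sub>R zeta_tilde psi C V bet gam t x"])
        (simp add: f g_tilde_def zeta_tilde_eq_kkt_control)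
  qed (use lagrangian_lower_bound[OF \<psi>] in
        \<open>auto simp: f g_tilde_def zeta_tilde_eq_kkt_control simp del: inner_e4\<close>)
  then show ?thesis by (simp add: f_def)
qed

lemma H1_zeta_psi:
  assumes D: "in_D T Sig_lo Sig_hi t x" and \<psi>: "0 < \<psi>"
  shows "H1 psi V bet gam \<psi> t x (zeta_psi Sig_lo Sig_hi psi C V bet gam \<psi> t x) =
           - (1/2) * g_tilde psi C V bet gam t x * indicator {Sig_lo<..<Sig_hi} (snd (snd (snd x))) * \<psi>"
proof -
  obtain S A M Sig where x: "x = (S, A, M, Sig)" by (cases x)
  show ?thesis
  proof (cases "Sig \<in> {Sig_lo<..<Sig_hi}")
    case True
    then show ?thesis
      using candidate_control_optimal[OF D \<psi>] by (simp add: Let_def x zeta_psi_def)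
  qed (simp add: x zeta_psi_def H1_def)
qed

end

locale bounded_candidate_control = candidate_control +
  fixes K_V :: real
  assumes Sig_lo_pos: "0 < Sig_lo"
    and V_bounds: "\<And>t S A M Sig. in_D T Sig_lo Sig_hi t (S, A, M, Sig) \<Longrightarrow>
           \<bar>V_Sig V t S A M Sig\<bar> \<le> K_V \<and>
           \<bar>bet t S A M * V_A V t S A M Sig + S\<^sup>2 * Gamma_V V gam t S A M Sig\<bar> \<le> K_V \<and>
           \<bar>S * dDelta_dSig V gam t S A M Sig\<bar> \<le> K_V \<and>
           \<bar>V_SigSig V t S A M Sig\<bar> \<le> K_V"
begin

lemma vvec_bound_at:
  assumes "in_D T Sig_lo Sig_hi t x"
  shows "\<bar>vvec V bet gam t x $ i\<bar> \<le> (1 + Sig_hi) * K_V"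
proof -
  obtain S A M Sig where x: "x = (S, A, M, Sig)" by (cases x)
  show ?thesis
    using assms Sig_lo_pos unfolding x
    by (intro vvec_component_bound V_bounds) (auto simp: in_D_def)
qed

lemma g_tilde_bounds:
  assumes D: "in_D T Sig_lo Sig_hi t x"
  shows "0 \<le> g_tilde psi C V bet gam t x \<and>
         g_tilde psi C V bet gam t x \<le> (\<Sum>i\<in>UNIV. psi $ i) * ((1 + Sig_hi) * K_V)\<^sup>2"
proof -
  interpret weighted_kkt psi "cvec C t x" "vvec V bet gam t x" using weighted_kkt_at[OF D] .
  show ?thesis
    using kkt_value_nonneg kkt_value_le weighted_square_le[OF vvec_bound_at[OF D]]
    by (simp add: g_tilde_def zeta_tilde_eq_kkt_control)
qed

lemma norm_zeta_tilde_le: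
  assumes D: "in_D T Sig_lo Sig_hi t x"
  shows "norm (zeta_tilde psi C V bet gam t x) \<le> (\<Sum>i\<in>UNIV. psi $ i) * ((1 + Sig_hi) * K_V)"
proof -
  interpret weighted_kkt psi "cvec C t x" "vvec V bet gam t x" using weighted_kkt_at[OF D] .
  define P where "P = (\<Sum>i\<in>UNIV. psi $ i)"
  have P: "0 \<le> P" using psi_pos by (simp add: P_def sum_nonneg less_imp_le)
  have "(norm (zeta_tilde psi C V bet gam t x))\<^sup>2 \<le> P * g_tilde psi C V bet gam t x"
    using norm_kkt_control_squared_le by (simp add: P_def g_tilde_def zeta_tilde_eq_kkt_control)
  also have "\<dots> \<le> P * (P * ((1 + Sig_hi) * K_V)\<^sup>2)"
    using g_tilde_bounds[OF D] P by (intro mult_left_mono) (simp_all add: P_def)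
  also have "\<dots> = (P * ((1 + Sig_hi) * K_V))\<^sup>2" by (simp add: power2_eq_square mult_ac)
  finally show ?thesis
    using P vvec_bound_at[OF D, of 1] by (simp add: P_def power2_le_iff_abs_le)
qed

lemma zeta_psi_deviation_le:
  assumes D: "in_D T Sig_lo Sig_hi t x" and \<psi>: "0 < \<psi>"
  shows "norm (zeta_psi Sig_lo Sig_hi psi C V bet gam \<psi> t x - zeta0 (snd (snd (snd x))))
           \<le> (\<Sum>i\<in>UNIV. psi $ i) * ((1 + Sig_hi) * K_V) * \<psi>"
proof -
  obtain S A M Sig where x: "x = (S, A, M, Sig)" by (cases x)
  have "norm (zeta_psi Sig_lo Sig_hi psi C V bet gam \<psi> t x - zeta0 Sig)
        = \<bar>indicator {Sig_lo<..<Sig_hi} Sig * \<psi>\<bar> * norm (zeta_tilde psi C V bet gam t x)"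
    by (simp add: zeta_psi_def x)
  also have "\<dots> \<le> \<psi> * norm (zeta_tilde psi C V bet gam t x)"
    using \<psi> by (intro mult_right_mono) (auto simp: indicator_def)
  also have "\<dots> \<le> \<psi> * ((\<Sum>i\<in>UNIV. psi $ i) * ((1 + Sig_hi) * K_V))"
    using \<psi> norm_zeta_tilde_le[OF D] by (intro mult_left_mono) auto
  finally show ?thesis by (simp add: x mult_ac)
qed

lemma g_tilde_uniformly_bounded:
  "\<exists>K_g>0. \<forall>t x. in_D T Sig_lo Sig_hi t x \<longrightarrow>
     0 \<le> g_tilde psi C V bet gam t x \<and> g_tilde psi C V bet gam t x \<le> K_g"
proof -
  have "0 \<le> (\<Sum>i\<in>UNIV. psi $ i)" using psi_pos by (simp add: sum_nonneg less_imp_le)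
  then have "0 < 1 + (\<Sum>i\<in>UNIV. psi $ i) * ((1 + Sig_hi) * K_V)\<^sup>2" by (simp add: add_pos_nonneg)
  then show ?thesis
    using g_tilde_bounds
    by (intro exI[of _ "1 + (\<Sum>i\<in>UNIV. psi $ i) * ((1 + Sig_hi) * K_V)\<^sup>2"]) fastforce
qed

lemma zeta_psi_deviation_uniformly_bounded:
  "\<exists>K_z\<ge>1. \<forall>t x \<psi>. in_D T Sig_lo Sig_hi t x \<longrightarrow> 0 < \<psi> \<longrightarrow>
     norm (zeta_psi Sig_lo Sig_hi psi C V bet gam \<psi> t x - zeta0 (snd (snd (snd x)))) \<le> K_z * \<psi>"
  using zeta_psi_deviation_le
  by (intro exI[of _ "max 1 ((\<Sum>i\<in>UNIV. psi $ i) * ((1 + Sig_hi) * K_V))"])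
    (fastforce intro: order_trans mult_right_mono)

definition lambda_scale :: real where
  "lambda_scale = (1 + 1 / Sig_lo) * (4 * ((1 + Sig_hi) * K_V) * (\<Sum>i\<in>UNIV. psi $ i) / (MIN i. psi $ i))"

lemma lam_frobenius_bound:
  assumes D: "in_D T Sig_lo Sig_hi t (S, A, M, Sig)"
    and Kc: "\<bar>C_SigSig C t S Sig\<bar> \<le> Kc *
               (\<bar>C_Sig C t S Sig\<bar> + \<bar>S\<^sup>2 * C_SS C t S Sig\<bar> + \<bar>S * C_SSig C t S Sig\<bar>)"
  shows "\<bar>lam psi C V bet gam t (S, A, M, Sig)\<bar>
           * frobenius_norm (mat2 (S\<^sup>2 * C_SS C t S Sig) (S * C_SSig C t S Sig)
                                  (S * C_SSig C t S Sig) (C_SigSig C t S Sig))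
           \<le> 2 * lambda_scale + lambda_scale * \<bar>Kc\<bar>"
proof -
  let ?c = "cvec C t (S, A, M, Sig)" and ?v = "vvec V bet gam t (S, A, M, Sig)"
  interpret weighted_kkt psi ?c ?v using weighted_kkt_at[OF D] .
  define l s where "l = \<bar>kkt_lambda psi ?c ?v\<bar>" and "s = \<bar>?c $ 1\<bar> + \<bar>?c $ 2\<bar> + \<bar>?c $ 3\<bar>"
  have frob: "frobenius_norm (mat2 (S\<^sup>2 * C_SS C t S Sig) (S * C_SSig C t S Sig)
                                  (S * C_SSig C t S Sig) (C_SigSig C t S Sig))
      \<le> (2 + \<bar>Kc\<bar>) * (1 + 1 / Sig_lo) * s"
    unfolding s_def using Sig_lo_pos D Kc by (intro frobenius_scaled_hessian_le) (auto simp: in_D_def)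
  have "l * s \<le> 4 * ((1 + Sig_hi) * K_V) * (\<Sum>i\<in>UNIV. psi $ i) / (MIN i. psi $ i)"
    unfolding l_def s_def using kkt_lambda_bound vvec_bound_at[OF D] by blast
  then have "(2 + \<bar>Kc\<bar>) * (1 + 1 / Sig_lo) * (l * s) \<le> (2 + \<bar>Kc\<bar>) * lambda_scale"
    unfolding lambda_scale_def mult.assoc using Sig_lo_pos
    by (intro mult_left_mono) (auto simp: add_nonneg_nonneg)
  moreover have "l * ((2 + \<bar>Kc\<bar>) * (1 + 1 / Sig_lo) * s) = (2 + \<bar>Kc\<bar>) * (1 + 1 / Sig_lo) * (l * s)"
    by (simp add: mult_ac)
  ultimately show ?thesis
    using mult_left_mono[OF frob, of l] by (simp add: l_def lam_eq_kkt_lambda algebra_simps)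
qed

lemma lam_frobenius_L2_bound:
  assumes C_SigSig_bound: "\<And>t S A M Sig. in_D T Sig_lo Sig_hi t (S, A, M, Sig) \<Longrightarrow>
           \<bar>C_SigSig C t S Sig\<bar> \<le> K_C t (S, A, M, Sig) *
             (\<bar>C_Sig C t S Sig\<bar> + \<bar>S\<^sup>2 * C_SS C t S Sig\<bar> + \<bar>S * C_SSig C t S Sig\<bar>)"
    and "Lp_P T Pf 2 K_C" and "\<forall>P\<in>Pf. prob_space P" and "0 \<le> T"
  shows "\<exists>K_l. Lp_P T Pf 2 K_l \<and>
          (\<forall>t S A M Sig. in_D T Sig_lo Sig_hi t (S, A, M, Sig) \<longrightarrow>
             \<bar>lam psi C V bet gam t (S, A, M, Sig)\<bar>
             * frobenius_norm (mat2 (S\<^sup>2 * C_SS C t S Sig) (S * C_SSig C t S Sig)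
                                    (S * C_SSig C t S Sig) (C_SigSig C t S Sig))
             \<le> K_l t (S, A, M, Sig))"
  using Lp_P_affine_abs[OF assms(2-4)] lam_frobenius_bound[OF _ C_SigSig_bound]
  by (intro exI[of _ "\<lambda>t x. 2 * lambda_scale + lambda_scale * \<bar>K_C t x\<bar>"]) auto

end

theorem lemma5p6:
  fixes T S0 Sig0 A0 Sig_lo Sig_hi :: real
    and Pf :: "path measure set"
    and psi :: vec4
    and C :: "real \<Rightarrow> real \<Rightarrow> real \<Rightarrow> real"
    and V :: vfun
    and alph bet gam delt :: cfun
    and K_C :: "real \<Rightarrow> real \<times> real \<times> real \<times> real \<Rightarrow> real"
    and K_V :: real
  assumes T_pos: "0 < T"
    and S0_pos: "0 < S0" and Sig0_pos: "0 < Sig0"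
    and Sig_bounds: "0 < Sig_lo" "Sig_lo < Sig0" "Sig0 < Sig_hi"
    and psi_pos: "\<forall>i. 0 < psi $ i"
    and models: "\<forall>P\<in>Pf. prob_space P \<and> sets P = sets (path_space T S0 Sig0 A0)"
    and coeffs_borel: "(\<lambda>(t, S, A, M). alph t S A M) \<in> borel_measurable borel"
        "(\<lambda>(t, S, A, M). bet t S A M) \<in> borel_measurable borel"
        "(\<lambda>(t, S, A, M). gam t S A M) \<in> borel_measurable borel"
        "(\<lambda>(t, S, A, M). delt t S A M) \<in> borel_measurable borel"
    and C_Sig_nz: "\<And>t S A M Sig. in_D T Sig_lo Sig_hi t (S, A, M, Sig) \<Longrightarrow> C_Sig C t S Sig \<noteq> 0"
    and C_SigSig_bound: "\<And>t S A M Sig. in_D T Sig_lo Sig_hi t (S, A, M, Sig) \<Longrightarrow>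
           \<bar>C_SigSig C t S Sig\<bar> \<le> K_C t (S, A, M, Sig) *
             (\<bar>C_Sig C t S Sig\<bar> + \<bar>S\<^sup>2 * C_SS C t S Sig\<bar> + \<bar>S * C_SSig C t S Sig\<bar>)"
    and K_C_L2: "Lp_P T Pf 2 K_C"
    and V_bounds: "\<And>t S A M Sig. in_D T Sig_lo Sig_hi t (S, A, M, Sig) \<Longrightarrow>
           \<bar>V_Sig V t S A M Sig\<bar> \<le> K_V \<and>
           \<bar>bet t S A M * V_A V t S A M Sig + S\<^sup>2 * Gamma_V V gam t S A M Sig\<bar> \<le> K_V \<and>
           \<bar>S * dDelta_dSig V gam t S A M Sig\<bar> \<le> K_V \<and>
           \<bar>V_SigSig V t S A M Sig\<bar> \<le> K_V"
  shows
    \<comment> \<open>(a)\<close>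
    "(\<forall>t x \<psi>. in_D T Sig_lo Sig_hi t x \<longrightarrow> 0 < \<psi> \<longrightarrow>
        (let z_star = zeta0 (snd (snd (snd x))) + \<psi> *\<^sub>R zeta_tilde psi C V bet gam t x;
             val = - (1/2) * g_tilde psi C V bet gam t x * \<psi>
         in z_star \<in> Z0_lin C t x \<and> H1 psi V bet gam \<psi> t x z_star = val \<and>
            (\<forall>z\<in>Z0_lin C t x. val \<le> H1 psi V bet gam \<psi> t x z)) \<and>
        cvec C t x \<bullet> zeta_tilde psi C V bet gam t x = 0 \<and>
        e4 \<bullet> zeta_tilde psi C V bet gam t x \<ge> 0)
     \<comment> \<open>(b)\<close>
     \<and> (\<forall>t x \<psi>. in_D T Sig_lo Sig_hi t x \<longrightarrow> 0 < \<psi> \<longrightarrow>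
        - (1/2) * g_tilde psi C V bet gam t x * \<psi> =
          (INF z. L1 psi C V bet gam \<psi> t x z (lam psi C V bet gam t x) (mu psi C V bet gam t x)))
     \<comment> \<open>(c)\<close>
     \<and> (\<exists>K_g>0. \<forall>t x. in_D T Sig_lo Sig_hi t x \<longrightarrow>
          0 \<le> g_tilde psi C V bet gam t x \<and> g_tilde psi C V bet gam t x \<le> K_g)
     \<comment> \<open>(d)\<close>
     \<and> (\<exists>K_z\<ge>1. \<forall>t x \<psi>. in_D T Sig_lo Sig_hi t x \<longrightarrow> 0 < \<psi> \<longrightarrow>
          norm (zeta_psi Sig_lo Sig_hi psi C V bet gam \<psi> t x - zeta0 (snd (snd (snd x)))) \<le> K_z * \<psi>)
     \<comment> \<open>(e)\<close>
     \<and> (\<forall>t x \<psi>. in_D T Sig_lo Sig_hi t x \<longrightarrow> 0 < \<psi> \<longrightarrow>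
          H1 psi V bet gam \<psi> t x (zeta_psi Sig_lo Sig_hi psi C V bet gam \<psi> t x) =
            - (1/2) * g_tilde psi C V bet gam t x
              * indicator {Sig_lo<..<Sig_hi} (snd (snd (snd x))) * \<psi>)
     \<comment> \<open>(f)\<close>
     \<and> (\<exists>K_l. Lp_P T Pf 2 K_l \<and>
          (\<forall>t S A M Sig. in_D T Sig_lo Sig_hi t (S, A, M, Sig) \<longrightarrow>
             \<bar>lam psi C V bet gam t (S, A, M, Sig)\<bar>
             * frobenius_norm (mat2 (S\<^sup>2 * C_SS C t S Sig) (S * C_SSig C t S Sig)
                                    (S * C_SSig C t S Sig) (C_SigSig C t S Sig))
             \<le> K_l t (S, A, M, Sig)))"
proof -
  interpret bounded_candidate_control T Sig_lo Sig_hi psi C V bet gam K_V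
    using psi_pos C_Sig_nz Sig_bounds(1) V_bounds by unfold_locales auto
  have "\<forall>P\<in>Pf. prob_space P" using models by blast
  then show ?thesis
    using candidate_control_optimal candidate_multipliers g_tilde_uniformly_bounded
      zeta_psi_deviation_uniformly_bounded H1_zeta_psi
      lam_frobenius_L2_bound[OF C_SigSig_bound K_C_L2 _ less_imp_le[OF T_pos]]
    by (intro conjI) blast+
qed

end
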